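(* As $n\to\infty$, $$E_Y(\Phi_n)=n^2+(1-2\gamma)n-2n\ln n+o(n),$$ where $\gamma$ is the Euler–Mascheroni constant.
   Context: $\mathcal{BT}_n$ is the set of binary phylogenetic trees with leaves bijectively labeled by $\{1,\dots,n\}$ (rooted, every internal node with exactly two children). For $T\in\mathcal{BT}_n$, $\Phi(T)=\sum_{1\le i<j\le n}\delta_T(LCA_T(i,j))$, where $\delta_T$ is depth (arcs from the root) and $LCA$ is lowest common ancestor; $\Phi_n$ is $\Phi(T)$ for random $T\in\mathcal{BT}_n$. Under the Yule model $T$ has probability $P_Y(T)=\frac{2^{n-1}}{n!}\prod_{v\in V_{int}(T)}\frac{1}{\kappa_T(v)-1}$, with $V_{int}(T)$ the internal nodes and $\kappa_T(v)$ the number of leaves below $v$; $E_Y$ is expectation under it. *)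

theory Defs
  imports "HOL-Analysis.Analysis" "HOL-Library.Landau_Symbols"
begin

text \<open>Children are ordered in the datatype; unordered (phylogenetic) trees are
  represented canonically by requiring that the smallest leaf label of the
  left subtree is smaller than that of the right subtree.\<close>

datatype phylo = Leaf nat | Node phylo phylo

fun leaves :: "phylo \<Rightarrow> nat set" where
  "leaves (Leaf a) = {a}"
| "leaves (Node l r) = leaves l \<union> leaves r"

fun nleaves :: "phylo \<Rightarrow> nat" where
  "nleaves (Leaf a) = 1"
| "nleaves (Node l r) = nleaves l + nleaves r"

fun canonical :: "phylo \<Rightarrow> bool" where
  "canonical (Leaf a) = True"
| "canonical (Node l r) = (canonical l \<and> canonical r \<and> Min (leaves l) < Min (leaves r))"

definition BT :: "nat \<Rightarrow> phylo set" where
  "BT n = {t. leaves t = {1..n} \<and> nleaves t = n \<and> canonical t}"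

fun lca_depth :: "phylo \<Rightarrow> nat \<Rightarrow> nat \<Rightarrow> nat" where
  "lca_depth (Leaf a) i j = 0"
| "lca_depth (Node l r) i j =
     (if i \<in> leaves l \<and> j \<in> leaves l then Suc (lca_depth l i j)
      else if i \<in> leaves r \<and> j \<in> leaves r then Suc (lca_depth r i j)
      else 0)"

definition Phi :: "nat \<Rightarrow> phylo \<Rightarrow> nat" where
  "Phi n t = (\<Sum>j\<in>{1..n}. \<Sum>i\<in>{1..<j}. lca_depth t i j)"

fun yule_prod :: "phylo \<Rightarrow> real" where
  "yule_prod (Leaf a) = 1"
| "yule_prod (Node l r) =
     yule_prod l * yule_prod r / (real (nleaves (Node l r)) - 1)"

definition P_Y :: "nat \<Rightarrow> phylo \<Rightarrow> real" where
  "P_Y n t = 2 ^ (n - 1) / fact n * yule_prod t"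

definition E_Y_Phi :: "nat \<Rightarrow> real" where
  "E_Y_Phi n = (\<Sum>t\<in>BT n. P_Y n t * real (Phi n t))"

end

theory Submission
  imports Defs
begin

(* Generalise from the leaf set {1..n} to an arbitrary finite leaf set S and
   let trees_on S be the canonical binary trees with leaf set S.  A tree in trees_on S with
   at least two leaves is a root joining a tree on A and a tree on S - A, where A is a
   proper subset of S containing Min S (a "split" of S), and this decomposition is a
   bijection.  Along it the Yule weight factors as yule_prod l * yule_prod r / (|S| - 1),
   and Phi becomes Phi(l) + Phi(r) plus one for each pair of leaves inside one subtree.
   Grouping the splits by their size k (there are C(|S|-1, k-1) of each size), strong
   induction on m = |S| shows that the total Yule weight of trees_on S is m!/2^(m-1) and
   that the Yule-weighted sum of Phi is this total times m(m+1) - 2 m H_m; both inductions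
   close by elementary identities on binomials and harmonic numbers.  Hence
   E_Y(Phi_n) = n(n+1) - 2 n H_n exactly, and the asymptotic statement follows from
   H_n - ln n --> euler_mascheroni. *)

lemma leaves_finite: "finite (leaves t)"
  by (induction t) auto

lemma leaves_nonempty: "leaves t \<noteq> {}"
  by (induction t) auto

text \<open>Leaf labels may repeat in the datatype, so the number of distinct labels is at most
  the number of leaves.\<close>
lemma card_leaves_le: "card (leaves t) \<le> nleaves t"
proof (induction t)
  case (Node l r)
  have "card (leaves l \<union> leaves r) \<le> card (leaves l) + card (leaves r)" by (rule card_Un_le)
  then show ?case using Node by simp
qed simp

lemma nleaves_Node_ge_2: "nleaves (Node l r) \<ge> 2"
proof -
  have "nleaves t \<ge> 1" for t by (induction t) auto
  then show ?thesis using add_mono[of 1 "nleaves l" 1 "nleaves r"] by simp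
qed

section \<open>Canonical trees on a finite leaf set and their root decomposition\<close>

definition trees_on :: "nat set \<Rightarrow> phylo set" where
  "trees_on S = {t. leaves t = S \<and> nleaves t = card S \<and> canonical t}"

lemma BT_eq_trees_on: "BT n = trees_on {1..n}"
  unfolding BT_def trees_on_def by simp

text \<open>The possible leaf sets of the left subtree of the root: proper subsets containing the
  minimal label (canonicity puts the smallest leaf on the left).\<close>
definition splits :: "nat set \<Rightarrow> nat set set" where
  "splits S = {A. A \<subseteq> S \<and> Min S \<in> A \<and> A \<noteq> S}"

lemma finite_splits: "finite S \<Longrightarrow> finite (splits S)"
  by (rule finite_subset[of _ "Pow S"]) (auto simp: splits_def)

lemma split_cards:
  assumes "finite S" "A \<in> splits S"
  shows "finite A" "A \<noteq> {}" "S - A \<noteq> {}" "card A < card S" "card (S - A) < card S"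
    "card (S - A) = card S - card A"
proof -
  have A: "A \<subseteq> S" "Min S \<in> A" "A \<noteq> S" using assms(2) by (auto simp: splits_def)
  show fA: "finite A" using A assms(1) finite_subset by auto
  show "A \<noteq> {}" "S - A \<noteq> {}" using A by auto
  show "card A < card S" using A assms(1) by (metis psubsetI psubset_card_mono)
  show "card (S - A) = card S - card A" using A fA by (simp add: card_Diff_subset)
  have "0 < card A" using fA \<open>A \<noteq> {}\<close> by (simp add: card_gt_0_iff)
  then show "card (S - A) < card S"
    using \<open>card A < card S\<close> \<open>card (S - A) = card S - card A\<close> by linarith
qed

lemma trees_on_small: "card S \<le> 1 \<Longrightarrow> trees_on S \<subseteq> Leaf ` S"
proof
  fix t assume S: "card S \<le> 1" and t: "t \<in> trees_on S"
  show "t \<in> Leaf ` S"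
  proof (cases t)
    case (Node l r)
    then show ?thesis using t S nleaves_Node_ge_2[of l r] by (simp add: trees_on_def)
  qed (use t in \<open>auto simp: trees_on_def\<close>)
qed

lemma trees_on_singleton: "trees_on {a} = {Leaf a}"
  using trees_on_small[of "{a}"] by (auto simp: trees_on_def)

lemma trees_on_decomp:
  assumes S: "finite S" "card S \<ge> 2"
  shows "trees_on S = (\<Union>A\<in>splits S. (\<lambda>(l, r). Node l r) ` (trees_on A \<times> trees_on (S - A)))"
proof
  show "trees_on S \<subseteq> (\<Union>A\<in>splits S. (\<lambda>(l, r). Node l r) ` (trees_on A \<times> trees_on (S - A)))"
  proof
    fix t assume t: "t \<in> trees_on S"
    then obtain l r where tlr: "t = Node l r"
      using S trees_on_small[of S] by (cases t) (auto simp: trees_on_def)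
    have lv: "leaves l \<union> leaves r = S" "nleaves l + nleaves r = card S"
      "canonical l" "canonical r" "Min (leaves l) < Min (leaves r)"
      using t tlr by (auto simp: trees_on_def)
    have fl: "finite (leaves l)" "finite (leaves r)" by (rule leaves_finite)+
    have ne: "leaves l \<noteq> {}" "leaves r \<noteq> {}" by (rule leaves_nonempty)+
    text \<open>Counting leaves forces the two leaf sets to be disjoint and label-injective.\<close>
    have "card S + card (leaves l \<inter> leaves r) = card (leaves l) + card (leaves r)"
      using card_Un_Int[OF fl] lv by simp
    then have ci: "card (leaves l \<inter> leaves r) = 0" "card (leaves l) = nleaves l"
      "card (leaves r) = nleaves r"
      using lv card_leaves_le[of l] card_leaves_le[of r] by linarith+
    have rS: "leaves r = S - leaves l" using lv ci fl by auto
    have "Min S = Min (leaves l)"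
      using lv Min_Un[OF fl(1) ne(1) fl(2) ne(2)] by simp
    then have "leaves l \<in> splits S"
      using lv rS ne fl by (auto simp: splits_def)
    moreover have "l \<in> trees_on (leaves l)" "r \<in> trees_on (S - leaves l)"
      using lv ci rS by (auto simp: trees_on_def)
    ultimately show "t \<in> (\<Union>A\<in>splits S. (\<lambda>(l, r). Node l r) ` (trees_on A \<times> trees_on (S - A)))"
      using tlr by blast
  qed
next
  show "(\<Union>A\<in>splits S. (\<lambda>(l, r). Node l r) ` (trees_on A \<times> trees_on (S - A))) \<subseteq> trees_on S"
  proof
    fix t assume "t \<in> (\<Union>A\<in>splits S. (\<lambda>(l, r). Node l r) ` (trees_on A \<times> trees_on (S - A)))"
    then obtain A l r where A: "A \<in> splits S" and l: "l \<in> trees_on A" and r: "r \<in> trees_on (S - A)"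
      and t: "t = Node l r" by auto
    have AS: "A \<subseteq> S" "Min S \<in> A" using A by (auto simp: splits_def)
    note c = split_cards[OF S(1) A]
    have "Min A = Min S" using AS c(1) S(1)
      by (metis Min_antimono Min_le antisym empty_iff subset_iff)
    moreover have "Min S < Min (S - A)"
    proof -
      have "Min (S - A) \<in> S" "Min (S - A) \<noteq> Min S" using Min_in[of "S - A"] c(3) S(1) AS by auto
      then show ?thesis using S(1) by (metis Min_le order_le_neq_trans)
    qed
    ultimately show "t \<in> trees_on S"
      using l r t AS c by (auto simp: trees_on_def)
  qed
qed

lemma finite_trees_on: "finite S \<Longrightarrow> finite (trees_on S)"
proof (induction "card S" arbitrary: S rule: less_induct)
  case less
  show ?case
  proof (cases "card S \<ge> 2")
    case True
    have "finite (trees_on A) \<and> finite (trees_on (S - A))" if "A \<in> splits S" for A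
      using less split_cards[OF less.prems that] by simp
    then show ?thesis
      unfolding trees_on_decomp[OF less.prems True] using finite_splits[OF less.prems] by blast
  next
    case False
    then show ?thesis using trees_on_small[of S] less.prems finite_subset by fastforce
  qed
qed

lemma sum_trees_on_split:
  assumes S: "finite S" "card S \<ge> 2"
  shows "sum g (trees_on S) = (\<Sum>A\<in>splits S. \<Sum>l\<in>trees_on A. \<Sum>r\<in>trees_on (S - A). g (Node l r))"
proof -
  let ?N = "\<lambda>(l, r). Node l r"
  have fin: "finite (?N ` (trees_on A \<times> trees_on (S - A)))" if "A \<in> splits S" for A
    using finite_trees_on[OF split_cards(1)[OF S(1) that]] finite_trees_on[of "S - A"] S(1) by simp
  have inj: "inj_on ?N X" for X by (rule inj_onI) auto
  have disj: "\<forall>A\<in>splits S. \<forall>B\<in>splits S. A \<noteq> B \<longrightarrow>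
      ?N ` (trees_on A \<times> trees_on (S - A)) \<inter> ?N ` (trees_on B \<times> trees_on (S - B)) = {}"
    by (auto simp: trees_on_def)
  have "sum g (trees_on S) = (\<Sum>A\<in>splits S. sum g (?N ` (trees_on A \<times> trees_on (S - A))))"
    unfolding trees_on_decomp[OF S]
    by (rule sum.UNION_disjoint[OF finite_splits[OF S(1)] _ disj]) (use fin in blast)
  also have "\<dots> = (\<Sum>A\<in>splits S. \<Sum>(l, r)\<in>trees_on A \<times> trees_on (S - A). g (Node l r))"
    by (intro sum.cong refl, subst sum.reindex[OF inj]) (simp add: comp_def case_prod_unfold)
  also have "\<dots> = (\<Sum>A\<in>splits S. \<Sum>l\<in>trees_on A. \<Sum>r\<in>trees_on (S - A). g (Node l r))"
    by (simp add: sum.cartesian_product)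
  finally show ?thesis .
qed

text \<open>A sum over the splits of an m-element set depending only on the size k of the split
  equals the binomially weighted sum over k: the splits of size k correspond to the
  (k-1)-subsets of S - {Min S}, excluding S - {Min S} itself.\<close>
lemma sum_splits_by_card:
  fixes h :: "nat \<Rightarrow> real"
  assumes S: "finite S" "card S = m" "m \<ge> 1"
  shows "(\<Sum>A\<in>splits S. h (card A)) = (\<Sum>k\<in>{1..<m}. real ((m-1) choose (k-1)) * h k)"
proof -
  define a where "a = Min S"
  define S' where "S' = S - {a}"
  have "S \<noteq> {}" using S by auto
  then have aS: "a \<in> S" using S Min_in[of S] by (simp add: a_def)
  have cS': "card S' = m - 1" and fS': "finite S'" and aS': "a \<notin> S'"
    using S aS by (auto simp: S'_def)
  have splits_eq: "splits S = insert a ` (Pow S' - {S'})"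
  proof
    show "splits S \<subseteq> insert a ` (Pow S' - {S'})"
    proof
      fix A assume "A \<in> splits S"
      then have A: "A \<subseteq> S" "a \<in> A" "A \<noteq> S" by (auto simp: a_def splits_def)
      then have "A = insert a (A - {a})" "A - {a} \<in> Pow S' - {S'}" using aS by (auto simp: S'_def)
      then show "A \<in> insert a ` (Pow S' - {S'})" by blast
    qed
    show "insert a ` (Pow S' - {S'}) \<subseteq> splits S"
      using aS aS' by (auto simp: splits_def a_def S'_def)
  qed
  have inj: "inj_on (insert a) (Pow S' - {S'})"
    by (rule inj_onI) (use aS' in auto)
  have "(\<Sum>A\<in>splits S. h (card A)) = (\<Sum>B\<in>Pow S' - {S'}. h (Suc (card B)))"
    unfolding splits_eq sum.reindex[OF inj] comp_def
  proof (intro sum.cong refl)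
    fix B assume "B \<in> Pow S' - {S'}"
    then have "finite B" "a \<notin> B" using fS' aS' finite_subset by auto
    then show "h (card (insert a B)) = h (Suc (card B))" by simp
  qed
  also have "\<dots> = (\<Sum>j\<in>{0..<m-1}. \<Sum>B\<in>{B\<in>Pow S' - {S'}. card B = j}. h (Suc (card B)))"
  proof (rule sum.group[symmetric])
    show "card ` (Pow S' - {S'}) \<subseteq> {0..<m-1}"
    proof
      fix x assume "x \<in> card ` (Pow S' - {S'})"
      then obtain B where "B \<subset> S'" "x = card B" by auto
      then have "x < card S'" using fS' by (simp add: psubset_card_mono)
      then show "x \<in> {0..<m-1}" using cS' by simp
    qed
  qed (use fS' in auto)
  also have "\<dots> = (\<Sum>j\<in>{0..<m-1}. real ((m-1) choose j) * h (Suc j))"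
  proof (rule sum.cong[OF refl])
    fix j assume "j \<in> {0..<m-1}"
    then have "{B\<in>Pow S' - {S'}. card B = j} = {B. B \<subseteq> S' \<and> card B = j}" using cS' by auto
    then show "(\<Sum>B\<in>{B\<in>Pow S' - {S'}. card B = j}. h (Suc (card B))) = real ((m-1) choose j) * h (Suc j)"
      using n_subsets[OF fS', of j] cS' by simp
  qed
  also have "\<dots> = (\<Sum>k\<in>{1..<m}. real ((m-1) choose (k-1)) * h k)"
    by (rule sum.reindex_bij_witness[where i="\<lambda>k. k - 1" and j="Suc"]) (use S in auto)
  finally show ?thesis .
qed

section \<open>Decomposition of Phi at the root\<close>

definition phiS :: "nat set \<Rightarrow> phylo \<Rightarrow> nat" where
  "phiS S t = (\<Sum>j\<in>S. \<Sum>i\<in>{i\<in>S. i < j}. lca_depth t i j)"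

lemma Phi_eq_phiS: "Phi n t = phiS {1..n} t"
proof -
  have "{i\<in>{1..n}. i < j} = {1..<j}" if "j \<in> {1..n}" for j using that by auto
  then show ?thesis unfolding Phi_def phiS_def by simp
qed

definition pairs :: "nat set \<Rightarrow> nat" where
  "pairs S = (\<Sum>j\<in>S. card {i\<in>S. i < j})"

lemma pairs_eq: "finite S \<Longrightarrow> real (pairs S) = real (card S) * (real (card S) - 1) / 2"
proof (induction S rule: finite_linorder_max_induct)
  case (insert b A)
  have "pairs (insert b A) = card {i\<in>insert b A. i < b} + (\<Sum>j\<in>A. card {i\<in>insert b A. i < j})"
    unfolding pairs_def using insert by auto
  also have "{i\<in>insert b A. i < b} = A" using insert by auto
  also have "(\<Sum>j\<in>A. card {i\<in>insert b A. i < j}) = pairs A"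
  proof -
    have "{i\<in>insert b A. i < j} = {i\<in>A. i < j}" if "j \<in> A" for j
      using insert that by auto
    then show ?thesis unfolding pairs_def by simp
  qed
  finally show ?case using insert by (auto simp: algebra_simps)
qed (simp add: pairs_def)

lemma sum_filter_less_Un:
  fixes A B :: "nat set"
  assumes "\<And>i. i \<in> B \<Longrightarrow> f i = 0"
  shows "(\<Sum>i\<in>{i\<in>A \<union> B. i < j}. f i) = (\<Sum>i\<in>{i\<in>A. i < j}. f i)"
proof -
  have "(\<Sum>i\<in>{i\<in>A \<union> B. i < j}. f i) = (\<Sum>i\<in>{i\<in>A. i < j} \<union> {i\<in>B. i < j}. f i)"
    by (rule sum.cong) auto
  also have "\<dots> = (\<Sum>i\<in>{i\<in>A. i < j}. f i)"
    by (rule sum.union_inter_neutral[THEN trans]) (use assms in \<open>auto intro: finite_subset[of _ "{..<j}"]\<close>)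
  finally show ?thesis .
qed

lemma sum_Suc: "(\<Sum>i\<in>X. Suc (f i)) = sum f X + card X"
  by (induction X rule: infinite_finite_induct) auto

text \<open>A pair of leaves of the left subtree has its LCA one level deeper in the whole tree,
  and pairs separated by the root contribute depth 0; hence Phi of the whole tree is Phi of
  both subtrees plus the number of pairs inside each subtree.\<close>
lemma phiS_Node:
  assumes disj: "leaves l \<inter> leaves r = {}"
  shows "phiS (leaves l \<union> leaves r) (Node l r)
     = phiS (leaves l) l + pairs (leaves l) + phiS (leaves r) r + pairs (leaves r)"
proof -
  define A where "A = leaves l"
  define B where "B = leaves r"
  have f: "finite A" "finite B" "A \<inter> B = {}" using leaves_finite disj by (auto simp: A_def B_def)
  have inner_A: "(\<Sum>i\<in>{i\<in>A \<union> B. i < j}. lca_depth (Node l r) i j)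
      = (\<Sum>i\<in>{i\<in>A. i < j}. lca_depth l i j) + card {i\<in>A. i < j}" if j: "j \<in> A" for j
  proof -
    have "(\<Sum>i\<in>{i\<in>A \<union> B. i < j}. lca_depth (Node l r) i j)
        = (\<Sum>i\<in>{i\<in>A. i < j}. lca_depth (Node l r) i j)"
      by (rule sum_filter_less_Un) (use f j in \<open>auto simp: A_def B_def\<close>)
    also have "\<dots> = (\<Sum>i\<in>{i\<in>A. i < j}. Suc (lca_depth l i j))"
      by (rule sum.cong) (use j in \<open>auto simp: A_def\<close>)
    finally show ?thesis by (simp add: sum_Suc)
  qed
  have inner_B: "(\<Sum>i\<in>{i\<in>A \<union> B. i < j}. lca_depth (Node l r) i j)
      = (\<Sum>i\<in>{i\<in>B. i < j}. lca_depth r i j) + card {i\<in>B. i < j}" if j: "j \<in> B" for j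
  proof -
    have "(\<Sum>i\<in>{i\<in>A \<union> B. i < j}. lca_depth (Node l r) i j)
        = (\<Sum>i\<in>{i\<in>B \<union> A. i < j}. lca_depth (Node l r) i j)" by (simp add: Un_commute)
    also have "\<dots> = (\<Sum>i\<in>{i\<in>B. i < j}. lca_depth (Node l r) i j)"
      by (rule sum_filter_less_Un) (use f j in \<open>auto simp: A_def B_def\<close>)
    also have "\<dots> = (\<Sum>i\<in>{i\<in>B. i < j}. Suc (lca_depth r i j))"
      by (rule sum.cong) (use f j in \<open>auto simp: A_def B_def\<close>)
    finally show ?thesis by (simp add: sum_Suc)
  qed
  have "phiS (A \<union> B) (Node l r) = (\<Sum>j\<in>A. \<Sum>i\<in>{i\<in>A \<union> B. i < j}. lca_depth (Node l r) i j)
         + (\<Sum>j\<in>B. \<Sum>i\<in>{i\<in>A \<union> B. i < j}. lca_depth (Node l r) i j)"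
    unfolding phiS_def by (rule sum.union_disjoint) (use f in auto)
  also have "\<dots> = phiS A l + pairs A + phiS B r + pairs B"
    using inner_A inner_B by (simp add: phiS_def pairs_def sum.distrib)
  finally show ?thesis by (simp add: A_def B_def)
qed

section \<open>The closed forms and their recurrences\<close>

text \<open>Total Yule weight of the trees on m labelled leaves: the reciprocal of the normalising
  factor 2^(m-1)/m! in P_Y.\<close>
definition yule_total :: "nat \<Rightarrow> real" where
  "yule_total m = fact m / 2 ^ (m - 1)"

definition phi_mean :: "nat \<Rightarrow> real" where
  "phi_mean m = real m * (real m + 1) - 2 * real m * harm m"

text \<open>Expected contribution of a root subtree with k leaves: its own Phi plus one for each
  of its k(k-1)/2 pairs, whose LCA moves one level down.\<close>
definition subtree_mean :: "nat \<Rightarrow> real" where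
  "subtree_mean k = phi_mean k + real k * (real k - 1) / 2"

text \<open>The recurrence characterising phi_mean; it is a telescoping consequence of
  H_(m+1) = H_m + 1/(m+1).\<close>
lemma sum_subtree_mean:
  "m \<ge> 1 \<Longrightarrow> 2 * (\<Sum>k\<in>{1..<m}. subtree_mean k) = (real m - 1) * phi_mean m"
proof (induction m rule: dec_induct)
  case (step m)
  have "{1..<Suc m} = insert m {1..<m}" using step by auto
  then have "2 * (\<Sum>k\<in>{1..<Suc m}. subtree_mean k) = 2 * subtree_mean m + (real m - 1) * phi_mean m"
    using step by (simp add: distrib_left)
  also have "\<dots> = (real (Suc m) - 1) * phi_mean (Suc m)"
    by (simp add: subtree_mean_def phi_mean_def harm_Suc field_simps)
  finally show ?case .
qed (simp add: phi_mean_def harm_def)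

lemma double_sum_atLeast1_lessThan: "2 * (\<Sum>k\<in>{1..<m}. real k) = real m * (real m - 1)"
proof (induction m)
  case (Suc m)
  then show ?case by (cases "m = 0") (auto simp: atLeastLessThanSuc algebra_simps)
qed simp

lemma split_weight:
  assumes "1 \<le> k" "k < m"
  shows "real ((m-1) choose (k-1)) * yule_total k * yule_total (m-k) / (real m - 1)
       = yule_total m * (2 * real k / (real m * (real m - 1)))"
proof -
  have binom: "real ((m-1) choose (k-1)) = fact (m-1) / (fact (k-1) * fact (m-k))"
    using assms binomial_fact[of "k-1" "m-1", where 'a=real] by simp
  have fact_k: "(fact k :: real) = real k * fact (k-1)" and fact_m: "(fact m :: real) = real m * fact (m-1)"
    using assms fact_reduce[of k] fact_reduce[of m] by simp_all
  have "(2::real) ^ (k-1) * 2 ^ (m-k-1) * 2 = 2 ^ ((k-1) + (m-k-1) + 1)"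
    by (simp add: power_add)
  also have "(k-1) + (m-k-1) + 1 = m - 1" using assms by simp
  finally have pow: "(2::real) ^ (k-1) * 2 ^ (m-k-1) * 2 = 2 ^ (m-1)" .
  have "real m - 1 \<noteq> 0" "real m \<noteq> 0" using assms by auto
  then show ?thesis
    unfolding binom yule_total_def fact_k fact_m pow[symmetric] by (simp add: field_simps)
qed

text \<open>The recurrence that the total Yule weight satisfies along the root decomposition:
  the relative split weights 2k/(m(m-1)) sum to one.\<close>
lemma yule_total_recurrence:
  assumes "m \<ge> 2"
  shows "(\<Sum>k\<in>{1..<m}. real ((m-1) choose (k-1)) * (yule_total k * yule_total (m-k) / (real m - 1)))
       = yule_total m"
proof -
  have "(\<Sum>k\<in>{1..<m}. real ((m-1) choose (k-1)) * (yule_total k * yule_total (m-k) / (real m - 1)))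
      = (\<Sum>k\<in>{1..<m}. yule_total m * (2 / (real m * (real m - 1))) * real k)"
    using split_weight by (intro sum.cong) (auto simp: mult.assoc)
  also have "\<dots> = yule_total m * (2 / (real m * (real m - 1))) * (\<Sum>k\<in>{1..<m}. real k)"
    by (simp add: sum_distrib_left)
  also have "(\<Sum>k\<in>{1..<m}. real k) = real m * (real m - 1) / 2"
    using double_sum_atLeast1_lessThan[of m] by simp
  also have "yule_total m * (2 / (real m * (real m - 1))) * (real m * (real m - 1) / 2) = yule_total m"
    using assms by simp
  finally show ?thesis .
qed

text \<open>By the symmetry k <-> m-k both subtree terms contribute equally, which reduces it to
  the recurrence of sum_subtree_mean.\<close>
lemma phi_mean_recurrence:
  assumes "m \<ge> 2"
  shows "(\<Sum>k\<in>{1..<m}. real ((m-1) choose (k-1)) *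
            (yule_total k * yule_total (m-k) * (subtree_mean k + subtree_mean (m-k)) / (real m - 1)))
       = yule_total m * phi_mean m"
proof -
  let ?c = "yule_total m * (2 / (real m * (real m - 1)))"
  have "(\<Sum>k\<in>{1..<m}. real ((m-1) choose (k-1)) *
            (yule_total k * yule_total (m-k) * (subtree_mean k + subtree_mean (m-k)) / (real m - 1)))
      = (\<Sum>k\<in>{1..<m}. ?c * (real k * subtree_mean k + real k * subtree_mean (m-k)))"
  proof (intro sum.cong refl)
    fix k assume k: "k \<in> {1..<m}"
    have "real ((m-1) choose (k-1)) *
            (yule_total k * yule_total (m-k) * (subtree_mean k + subtree_mean (m-k)) / (real m - 1))
        = (real ((m-1) choose (k-1)) * yule_total k * yule_total (m-k) / (real m - 1))
            * (subtree_mean k + subtree_mean (m-k))"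
      by simp
    also have "real ((m-1) choose (k-1)) * yule_total k * yule_total (m-k) / (real m - 1)
        = yule_total m * (2 * real k / (real m * (real m - 1)))"
      by (rule split_weight) (use k in auto)
    finally show "real ((m-1) choose (k-1)) *
            (yule_total k * yule_total (m-k) * (subtree_mean k + subtree_mean (m-k)) / (real m - 1))
        = ?c * (real k * subtree_mean k + real k * subtree_mean (m-k))"
      by (simp add: algebra_simps)
  qed
  also have "\<dots> = ?c * ((\<Sum>k\<in>{1..<m}. real k * subtree_mean k) + (\<Sum>k\<in>{1..<m}. real k * subtree_mean (m-k)))"
    by (simp only: sum.distrib[symmetric] sum_distrib_left)
  also have "(\<Sum>k\<in>{1..<m}. real k * subtree_mean (m-k)) = (\<Sum>k\<in>{1..<m}. real (m-k) * subtree_mean k)"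
    by (rule sum.reindex_bij_witness[where i="\<lambda>k. m - k" and j="\<lambda>k. m - k"]) auto
  also have "(\<Sum>k\<in>{1..<m}. real k * subtree_mean k) + (\<Sum>k\<in>{1..<m}. real (m-k) * subtree_mean k)
      = real m * (\<Sum>k\<in>{1..<m}. subtree_mean k)"
    by (simp add: sum.distrib[symmetric] sum_distrib_left of_nat_diff algebra_simps)
  also have "(\<Sum>k\<in>{1..<m}. subtree_mean k) = (real m - 1) * phi_mean m / 2"
    using sum_subtree_mean[of m] assms by (simp add: eq_divide_eq)
  also have "?c * (real m * ((real m - 1) * phi_mean m / 2)) = yule_total m * phi_mean m"
    using assms by simp
  finally show ?thesis .
qed

section \<open>Yule-weighted sums over all trees on a leaf set\<close>

lemma sum_yule_prod_trees_on:
  assumes "finite S" "S \<noteq> {}"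
  shows "(\<Sum>t\<in>trees_on S. yule_prod t) = yule_total (card S)"
  using assms
proof (induction "card S" arbitrary: S rule: less_induct)
  case less
  define m where "m = card S"
  have "m \<ge> 1" using less.prems by (simp add: m_def Suc_le_eq card_gt_0_iff)
  show ?case
  proof (cases "m = 1")
    case True
    then obtain a where "S = {a}" by (auto simp: m_def card_1_singleton_iff)
    then show ?thesis by (simp add: trees_on_singleton yule_total_def)
  next
    case False
    then have m2: "m \<ge> 2" using \<open>m \<ge> 1\<close> by simp
    let ?h = "\<lambda>k. yule_total k * yule_total (m - k) / (real m - 1)"
    have block: "(\<Sum>l\<in>trees_on A. \<Sum>r\<in>trees_on (S - A). yule_prod (Node l r)) = ?h (card A)"
      if A: "A \<in> splits S" for A
    proof -
      note c = split_cards[OF less.prems(1) A]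
      have node: "yule_prod (Node l r) = yule_prod l * yule_prod r / (real m - 1)"
        if "l \<in> trees_on A" "r \<in> trees_on (S - A)" for l r
        using that c by (simp add: trees_on_def m_def)
      have "(\<Sum>l\<in>trees_on A. \<Sum>r\<in>trees_on (S - A). yule_prod (Node l r))
          = (\<Sum>l\<in>trees_on A. \<Sum>r\<in>trees_on (S - A). yule_prod l * yule_prod r / (real m - 1))"
        by (intro sum.cong refl) (simp only: node)
      also have "\<dots> = (\<Sum>l\<in>trees_on A. yule_prod l) * (\<Sum>r\<in>trees_on (S - A). yule_prod r) / (real m - 1)"
        by (simp add: sum_product sum_divide_distrib)
      also have "\<dots> = yule_total (card A) * yule_total (m - card A) / (real m - 1)"
        using less.hyps c less.prems(1) by (simp add: m_def)
      finally show ?thesis .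
    qed
    have "(\<Sum>t\<in>trees_on S. yule_prod t) = (\<Sum>A\<in>splits S. \<Sum>l\<in>trees_on A. \<Sum>r\<in>trees_on (S - A). yule_prod (Node l r))"
      by (rule sum_trees_on_split) (use less.prems(1) m2 in \<open>simp_all add: m_def\<close>)
    also have "\<dots> = (\<Sum>A\<in>splits S. ?h (card A))"
      using block by simp
    also have "\<dots> = (\<Sum>k\<in>{1..<m}. real ((m-1) choose (k-1)) * ?h k)"
      by (rule sum_splits_by_card[of S m ?h]) (use less.prems(1) \<open>m \<ge> 1\<close> in \<open>simp_all add: m_def\<close>)
    also have "\<dots> = yule_total m" using yule_total_recurrence[OF m2] .
    finally show ?thesis by (simp add: m_def)
  qed
qed

lemma double_sum_separate:
  fixes a b p q :: "'a \<Rightarrow> real"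
  shows "(\<Sum>l\<in>X. \<Sum>r\<in>Y. a l * b r / d * (p l + c + q r))
    = ((\<Sum>l\<in>X. a l * p l) * (\<Sum>r\<in>Y. b r) + c * (\<Sum>l\<in>X. a l) * (\<Sum>r\<in>Y. b r)
       + (\<Sum>l\<in>X. a l) * (\<Sum>r\<in>Y. b r * q r)) / d"
proof -
  have "(\<Sum>l\<in>X. \<Sum>r\<in>Y. a l * b r / d * (p l + c + q r))
      = (\<Sum>l\<in>X. \<Sum>r\<in>Y. a l * p l * b r + c * (a l * b r) + a l * (b r * q r)) / d"
    by (simp add: sum_divide_distrib algebra_simps)
  also have "\<dots> = ((\<Sum>l\<in>X. \<Sum>r\<in>Y. a l * p l * b r) + c * (\<Sum>l\<in>X. \<Sum>r\<in>Y. a l * b r)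
      + (\<Sum>l\<in>X. \<Sum>r\<in>Y. a l * (b r * q r))) / d"
    by (simp only: sum.distrib sum_distrib_left)
  finally show ?thesis by (simp add: sum_product mult.assoc)
qed

lemma phi_block:
  assumes A: "finite A" "A \<noteq> {}" and B: "finite B" "B \<noteq> {}" and disj: "A \<inter> B = {}"
    and phiA: "(\<Sum>t\<in>trees_on A. yule_prod t * real (phiS A t)) = yule_total (card A) * phi_mean (card A)"
    and phiB: "(\<Sum>t\<in>trees_on B. yule_prod t * real (phiS B t)) = yule_total (card B) * phi_mean (card B)"
  shows "(\<Sum>l\<in>trees_on A. \<Sum>r\<in>trees_on B. yule_prod (Node l r) * real (phiS (A \<union> B) (Node l r)))
       = yule_total (card A) * yule_total (card B) * (subtree_mean (card A) + subtree_mean (card B))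
         / (real (card A + card B) - 1)"
proof -
  let ?d = "real (card A + card B) - 1"
  let ?c = "real (pairs A) + real (pairs B)"
  have node: "yule_prod (Node l r) * real (phiS (A \<union> B) (Node l r))
      = yule_prod l * yule_prod r / ?d * (real (phiS A l) + ?c + real (phiS B r))"
    if "l \<in> trees_on A" "r \<in> trees_on B" for l r
    using that phiS_Node[of l r] disj by (simp add: trees_on_def algebra_simps)
  have "(\<Sum>l\<in>trees_on A. \<Sum>r\<in>trees_on B. yule_prod (Node l r) * real (phiS (A \<union> B) (Node l r)))
      = (\<Sum>l\<in>trees_on A. \<Sum>r\<in>trees_on B. yule_prod l * yule_prod r / ?d * (real (phiS A l) + ?c + real (phiS B r)))"
    by (intro sum.cong refl) (simp only: node)
  also have "\<dots> = ((\<Sum>l\<in>trees_on A. yule_prod l * real (phiS A l)) * (\<Sum>r\<in>trees_on B. yule_prod r)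
      + ?c * (\<Sum>l\<in>trees_on A. yule_prod l) * (\<Sum>r\<in>trees_on B. yule_prod r)
      + (\<Sum>l\<in>trees_on A. yule_prod l) * (\<Sum>r\<in>trees_on B. yule_prod r * real (phiS B r))) / ?d"
    by (rule double_sum_separate)
  also have "\<dots> = (yule_total (card A) * phi_mean (card A) * yule_total (card B)
      + ?c * yule_total (card A) * yule_total (card B)
      + yule_total (card A) * (yule_total (card B) * phi_mean (card B))) / ?d"
    using phiA phiB sum_yule_prod_trees_on A B by simp
  also have "yule_total (card A) * phi_mean (card A) * yule_total (card B)
      + ?c * yule_total (card A) * yule_total (card B)
      + yule_total (card A) * (yule_total (card B) * phi_mean (card B))
      = yule_total (card A) * yule_total (card B) * (subtree_mean (card A) + subtree_mean (card B))"
    unfolding subtree_mean_def pairs_eq[OF A(1)] pairs_eq[OF B(1)] by (simp add: field_simps)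
  finally show ?thesis .
qed

lemma sum_yule_phi_trees_on:
  assumes "finite S" "S \<noteq> {}"
  shows "(\<Sum>t\<in>trees_on S. yule_prod t * real (phiS S t)) = yule_total (card S) * phi_mean (card S)"
  using assms
proof (induction "card S" arbitrary: S rule: less_induct)
  case less
  define m where "m = card S"
  have "m \<ge> 1" using less.prems by (simp add: m_def Suc_le_eq card_gt_0_iff)
  show ?case
  proof (cases "m = 1")
    case True
    then obtain a where "S = {a}" by (auto simp: m_def card_1_singleton_iff)
    then show ?thesis by (simp add: trees_on_singleton phiS_def phi_mean_def harm_def)
  next
    case False
    then have m2: "m \<ge> 2" using \<open>m \<ge> 1\<close> by simp
    let ?h = "\<lambda>k. yule_total k * yule_total (m - k) * (subtree_mean k + subtree_mean (m - k)) / (real m - 1)"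
    have block: "(\<Sum>l\<in>trees_on A. \<Sum>r\<in>trees_on (S - A). yule_prod (Node l r) * real (phiS S (Node l r)))
        = ?h (card A)" if A: "A \<in> splits S" for A
    proof -
      note c = split_cards[OF less.prems(1) A]
      have "A \<union> (S - A) = S" using A by (auto simp: splits_def)
      moreover have "card A + card (S - A) = m" using c by (simp add: m_def)
      ultimately show ?thesis
        using phi_block[of A "S - A"] c less.hyps less.prems(1) by (simp add: m_def)
    qed
    have "(\<Sum>t\<in>trees_on S. yule_prod t * real (phiS S t))
        = (\<Sum>A\<in>splits S. \<Sum>l\<in>trees_on A. \<Sum>r\<in>trees_on (S - A). yule_prod (Node l r) * real (phiS S (Node l r)))"
      by (rule sum_trees_on_split) (use less.prems(1) m2 in \<open>simp_all add: m_def\<close>)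
    also have "\<dots> = (\<Sum>A\<in>splits S. ?h (card A))"
      using block by simp
    also have "\<dots> = (\<Sum>k\<in>{1..<m}. real ((m-1) choose (k-1)) * ?h k)"
      by (rule sum_splits_by_card[of S m ?h]) (use less.prems(1) \<open>m \<ge> 1\<close> in \<open>simp_all add: m_def\<close>)
    also have "\<dots> = yule_total m * phi_mean m" using phi_mean_recurrence[OF m2] .
    finally show ?thesis by (simp add: m_def)
  qed
qed

lemma E_Y_Phi_closed_form:
  assumes "n \<ge> 1"
  shows "E_Y_Phi n = phi_mean n"
proof -
  have "E_Y_Phi n = 2 ^ (n - 1) / fact n * (\<Sum>t\<in>trees_on {1..n}. yule_prod t * real (phiS {1..n} t))"
    unfolding E_Y_Phi_def BT_eq_trees_on P_Y_def Phi_eq_phiS by (simp add: sum_distrib_left mult.assoc)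
  also have "\<dots> = 2 ^ (n - 1) / fact n * (yule_total n * phi_mean n)"
    using sum_yule_phi_trees_on[of "{1..n}"] assms by simp
  finally show ?thesis by (simp add: yule_total_def)
qed

theorem mainTheorem15:
  shows "(\<lambda>n. E_Y_Phi n - ((real n)^2 + (1 - 2 * euler_mascheroni) * real n
                              - 2 * real n * ln (real n)))
         \<in> o(\<lambda>n. real n)"
proof (rule smalloI_tendsto)
  let ?err = "\<lambda>n. E_Y_Phi n - ((real n)^2 + (1 - 2 * euler_mascheroni) * real n
                              - 2 * real n * ln (real n))"
  have "eventually (\<lambda>n. -2 * (harm n - ln (real n) - euler_mascheroni) = ?err n / real n) at_top"
    using eventually_ge_at_top[of "1::nat"]
    by eventually_elim (simp add: E_Y_Phi_closed_form phi_mean_def field_simps power2_eq_square)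
  moreover have "(\<lambda>n. -2 * (harm n - ln (real n) - euler_mascheroni)) \<longlonglongrightarrow> -2 * (euler_mascheroni - euler_mascheroni)"
    by (intro tendsto_intros euler_mascheroni_LIMSEQ)
  ultimately show "((\<lambda>n. ?err n / real n) \<longlongrightarrow> 0) at_top"
    by (simp add: tendsto_cong)
  show "eventually (\<lambda>n. real n \<noteq> 0) at_top"
    using eventually_gt_at_top[of "0::nat"] by eventually_elim simp
qed

end
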